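(* Let $\{X_t\}_{t\in\mathbb N^+}$ be a real-valued process adapted to a filtration $\{\mathcal F_t\}_{t\in\mathbb N}$ with $\mathcal F_0$ trivial, such that for all $t\in\mathbb N^+$, $\mathbb E[X_t\mid\mathcal F_{t-1}]=\mu$ (an unknown constant) and $\mathbb E[(X_t-\mu)^2\mid\mathcal F_{t-1}]\le\sigma^2$ ($\sigma^2$ known). Let $\alpha\in(0,1)$ and let $\{\lambda_t\}_{t\in\mathbb N^+}$ be any predictable process. Writing each $\sum$ for $\sum_{i=1}^t$, define $$U_t^+=\frac{\sum\lambda_i^2X_i}{3}-\sum\lambda_i,\qquad U_t^-=\frac{\sum\lambda_i^2X_i}{3}+\sum\lambda_i,$$ $$\mathrm{aCI}^{\mathsf{SN}+}_t=\left(\frac{U_t^+-\sqrt{D_t^+}}{\sum\lambda_i^2/3},\ \frac{U_t^++\sqrt{D_t^+}}{\sum\lambda_i^2/3}\right),\quad D_t^+=(U_t^+)^2-\frac{2\sum\lambda_i^2}{3}\left(\log(2/\alpha)-\sum\lambda_iX_i+\frac{\sum\lambda_i^2X_i^2+2\sigma^2\sum\lambda_i^2}{6}\right),$$ $$\mathrm{aCI}^{\mathsf{SN}-}_t=\left(\frac{U_t^--\sqrt{D_t^-}}{\sum\lambda_i^2/3},\ \frac{U_t^-+\sqrt{D_t^-}}{\sum\lambda_i^2/3}\right),\quad D_t^-=(U_t^-)^2-\frac{2\sum\lambda_i^2}{3}\left(\log(2/\alpha)+\sum\lambda_iX_i+\frac{\sum\lambda_i^2X_i^2+2\sigma^2\sum\lambda_i^2}{6}\right),$$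 with the convention that an interval is empty when the quantity under its square root is negative. Then $$\Pr\left[\forall t\in\mathbb N^+,\ \mu\notin\mathrm{aCI}^{\mathsf{SN}+}_t\right]\ge1-\alpha/2\quad\text{and}\quad\Pr\left[\forall t\in\mathbb N^+,\ \mu\notin\mathrm{aCI}^{\mathsf{SN}-}_t\right]\ge1-\alpha/2.$$
   Context: A process $\{\lambda_t\}$ is predictable if each $\lambda_t$ is $\mathcal F_{t-1}$-measurable. *)

theory Defs
  imports "HOL-Probability.Probability"
begin

definition sn_interval :: "real \<Rightarrow> real \<Rightarrow> real \<Rightarrow> real set" where
  "sn_interval U D S = (if D < 0 then {} else {(U - sqrt D) / S <..< (U + sqrt D) / S})"

definition U_plus :: "(nat \<Rightarrow> 'a \<Rightarrow> real) \<Rightarrow> (nat \<Rightarrow> 'a \<Rightarrow> real) \<Rightarrow> nat \<Rightarrow> 'a \<Rightarrow> real" where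
  "U_plus lam X t w = (\<Sum>i=1..t. (lam i w)^2 * X i w) / 3 - (\<Sum>i=1..t. lam i w)"

definition U_minus :: "(nat \<Rightarrow> 'a \<Rightarrow> real) \<Rightarrow> (nat \<Rightarrow> 'a \<Rightarrow> real) \<Rightarrow> nat \<Rightarrow> 'a \<Rightarrow> real" where
  "U_minus lam X t w = (\<Sum>i=1..t. (lam i w)^2 * X i w) / 3 + (\<Sum>i=1..t. lam i w)"

definition D_plus :: "real \<Rightarrow> real \<Rightarrow> (nat \<Rightarrow> 'a \<Rightarrow> real) \<Rightarrow> (nat \<Rightarrow> 'a \<Rightarrow> real) \<Rightarrow> nat \<Rightarrow> 'a \<Rightarrow> real" where
  "D_plus \<alpha> \<sigma>2 lam X t w =
     (U_plus lam X t w)^2 - 2 * (\<Sum>i=1..t. (lam i w)^2) / 3 *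
       (ln (2 / \<alpha>) - (\<Sum>i=1..t. lam i w * X i w)
        + ((\<Sum>i=1..t. (lam i w)^2 * (X i w)^2) + 2 * \<sigma>2 * (\<Sum>i=1..t. (lam i w)^2)) / 6)"

definition D_minus :: "real \<Rightarrow> real \<Rightarrow> (nat \<Rightarrow> 'a \<Rightarrow> real) \<Rightarrow> (nat \<Rightarrow> 'a \<Rightarrow> real) \<Rightarrow> nat \<Rightarrow> 'a \<Rightarrow> real" where
  "D_minus \<alpha> \<sigma>2 lam X t w =
     (U_minus lam X t w)^2 - 2 * (\<Sum>i=1..t. (lam i w)^2) / 3 *
       (ln (2 / \<alpha>) + (\<Sum>i=1..t. lam i w * X i w)
        + ((\<Sum>i=1..t. (lam i w)^2 * (X i w)^2) + 2 * \<sigma>2 * (\<Sum>i=1..t. (lam i w)^2)) / 6)"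

definition aCI_SN_plus :: "real \<Rightarrow> real \<Rightarrow> (nat \<Rightarrow> 'a \<Rightarrow> real) \<Rightarrow> (nat \<Rightarrow> 'a \<Rightarrow> real) \<Rightarrow> nat \<Rightarrow> 'a \<Rightarrow> real set" where
  "aCI_SN_plus \<alpha> \<sigma>2 lam X t w =
     sn_interval (U_plus lam X t w) (D_plus \<alpha> \<sigma>2 lam X t w) ((\<Sum>i=1..t. (lam i w)^2) / 3)"

definition aCI_SN_minus :: "real \<Rightarrow> real \<Rightarrow> (nat \<Rightarrow> 'a \<Rightarrow> real) \<Rightarrow> (nat \<Rightarrow> 'a \<Rightarrow> real) \<Rightarrow> nat \<Rightarrow> 'a \<Rightarrow> real set" where
  "aCI_SN_minus \<alpha> \<sigma>2 lam X t w =
     sn_interval (U_minus lam X t w) (D_minus \<alpha> \<sigma>2 lam X t w) ((\<Sum>i=1..t. (lam i w)^2) / 3)"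

end

theory Submission
  imports Defs
begin

(* With S_t = sum_{i=1..t} [lam_i (X_i - mu) - lam_i^2 ((X_i - mu)^2 + 2 sigma^2) / 6], the process
   exp S_t is a nonnegative supermartingale starting at 1: by exp (x - x^2/6) <= 1 + x + x^2/3,
   conditioning on F_{t-1} kills the linear term, bounds the quadratic one by lam_t^2 sigma^2 / 3,
   and (1 + y) exp (-y) <= 1 absorbs the rest.  Ville's inequality then gives
   P(exists t. S_t >= ln (2/alpha)) <= alpha/2.  The condition S_t > ln (2/alpha), read as a quadratic
   inequality in mu, says exactly that mu lies in aCI^{SN+}_t; replacing lam by -lam gives
   aCI^{SN-}_t. *)

lemma exp_diff_square_le: "exp (x - x^2/6) \<le> 1 + x + x^2/(3::real)"
proof -
  have q_pos: "0 < 1 + y + y^2/3" for y :: real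
  proof -
    have "1 + y + y^2/3 = (y + 3/2)^2/3 + 1/4" by (simp add: power2_eq_square field_simps)
    then show ?thesis by (simp add: add_nonneg_pos)
  qed
  define f where "f y = ln (1 + y + y^2/3) - y + y^2/6" for y :: real
  have f': "DERIV f y :> y^3 / (9 * (1 + y + y^2/3))" for y
  proof -
    have "DERIV f y :> (1 + 2*y/3) / (1 + y + y^2/3) - 1 + y/3"
      unfolding f_def[abs_def] using q_pos[of y]
      by (auto intro!: derivative_eq_intros simp: power2_eq_square field_simps)
    moreover have "(1 + 2*y/3) / (1 + y + y^2/3) - 1 + y/3 = y^3 / (9 * (1 + y + y^2/3))"
      using q_pos[of y] by (simp add: field_simps power2_eq_square power3_eq_cube)
    ultimately show ?thesis by simp
  qed
  \<comment> \<open>\<open>f'\<close> has the sign of \<open>y\<close>, so \<open>f\<close> is minimal at \<open>0\<close>.\<close>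
  have "f 0 \<le> f x"
  proof (cases "0 \<le> x")
    case True
    show ?thesis
    proof (rule DERIV_nonneg_imp_nondecreasing[OF True])
      fix y :: real assume "0 \<le> y"
      then show "\<exists>d. DERIV f y :> d \<and> 0 \<le> d"
        using f'[of y] q_pos[of y]
        by (intro exI[of _ "y^3 / (9 * (1 + y + y^2/3))"] conjI) (auto intro!: divide_nonneg_pos)
    qed
  next
    case False
    show ?thesis
    proof (rule DERIV_nonpos_imp_nonincreasing[of x 0])
      show "x \<le> 0" using False by simp
      fix y :: real assume "y \<le> 0"
      then have "y^3 \<le> 0" by (simp add: power_le_zero_eq)
      then show "\<exists>d. DERIV f y :> d \<and> d \<le> 0"
        using f'[of y] q_pos[of y]
        by (intro exI[of _ "y^3 / (9 * (1 + y + y^2/3))"] conjI) (auto intro!: divide_nonpos_pos)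
    qed
  qed
  then have "x - x^2/6 \<le> ln (1 + x + x^2/3)" by (simp add: f_def)
  then show ?thesis using q_pos[of x] by (metis exp_le_cancel_iff exp_ln)
qed

definition sn_increment :: "real \<Rightarrow> real \<Rightarrow> real \<Rightarrow> real \<Rightarrow> real" where
  "sn_increment \<mu> \<sigma>2 l x = l * (x - \<mu>) - l^2 * ((x - \<mu>)^2 + 2 * \<sigma>2) / 6"

lemma sn_increment_le:
  assumes "0 \<le> \<sigma>2" shows "sn_increment \<mu> \<sigma>2 l x \<le> 3/2"
proof -
  have "(l * (x - \<mu>) - 3)^2 \<ge> 0" by simp
  moreover have "0 \<le> l^2 * \<sigma>2" using assms by simp
  ultimately show ?thesis
    by (simp add: sn_increment_def power2_eq_square field_simps)
qed

lemma exp_sn_increment_le: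
  "exp (sn_increment \<mu> \<sigma>2 l x)
     \<le> exp (- (l^2 * \<sigma>2 / 3)) * (1 + l * (x - \<mu>) + l^2 / 3 * (x - \<mu>)^2)"
proof -
  have split: "sn_increment \<mu> \<sigma>2 l x = - (l^2 * \<sigma>2 / 3) + (l * (x - \<mu>) - (l * (x - \<mu>))^2 / 6)"
    by (simp add: sn_increment_def power2_eq_square field_simps)
  have "exp (sn_increment \<mu> \<sigma>2 l x) = exp (- (l^2 * \<sigma>2 / 3)) * exp (l * (x - \<mu>) - (l * (x - \<mu>))^2 / 6)"
    unfolding split by (rule exp_add)
  also have "\<dots> \<le> exp (- (l^2 * \<sigma>2 / 3)) * (1 + l * (x - \<mu>) + (l * (x - \<mu>))^2 / 3)"
    by (intro mult_left_mono exp_diff_square_le) simp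
  finally show ?thesis by (simp add: power_mult_distrib)
qed

lemma exp_neg_mult_one_plus_le: "exp (- y) * (1 + y) \<le> (1::real)"
  using exp_ge_add_one_self[of y] by (simp add: exp_minus field_simps)

lemma integrable_bounded_mult:
  fixes f h :: "'a \<Rightarrow> real"
  assumes "integrable M f" "h \<in> borel_measurable M" "\<And>x. x \<in> space M \<Longrightarrow> \<bar>h x\<bar> \<le> B"
  shows "integrable M (\<lambda>x. h x * f x)"
proof (rule Bochner_Integration.integrable_bound[where f="\<lambda>x. B * f x"])
  show "integrable M (\<lambda>x. B * f x)" using assms(1) by simp
  show "(\<lambda>x. h x * f x) \<in> borel_measurable M" using assms(1,2) by measurable
  show "AE x in M. norm (h x * f x) \<le> norm (B * f x)"
  proof (rule AE_I2)
    fix x assume "x \<in> space M"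
    then have "\<bar>h x\<bar> \<le> \<bar>B\<bar>" using assms(3) by fastforce
    then show "norm (h x * f x) \<le> norm (B * f x)" by (simp add: abs_mult mult_right_mono)
  qed
qed

context finite_measure_subalgebra
begin

lemma integral_mult_exp_sn_increment_le_bounded:
  assumes Z_meas[measurable]: "Z \<in> borel_measurable F"
    and l_meas[measurable]: "l \<in> borel_measurable F"
    and Z: "\<And>w. w \<in> space M \<Longrightarrow> 0 \<le> Z w \<and> Z w \<le> B"
    and l: "\<And>w. w \<in> space M \<Longrightarrow> \<bar>l w\<bar> \<le> K"
    and X: "integrable M X" "integrable M (\<lambda>w. (X w - \<mu>)^2)"
    and mean: "AE w in M. real_cond_exp M F X w = \<mu>"
    and var: "AE w in M. real_cond_exp M F (\<lambda>w. (X w - \<mu>)^2) w \<le> \<sigma>2"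
    and "0 \<le> \<sigma>2"
  shows "(\<integral>w. Z w * exp (sn_increment \<mu> \<sigma>2 (l w) (X w)) \<partial>M) \<le> (\<integral>w. Z w \<partial>M)"
proof -
  have [measurable]: "Z \<in> borel_measurable M" "l \<in> borel_measurable M" "X \<in> borel_measurable M"
    using measurable_from_subalg[OF subalg Z_meas] measurable_from_subalg[OF subalg l_meas] X(1)
    by auto
  define h where "h w = Z w * exp (- ((l w)^2 * \<sigma>2 / 3))" for w
  define a where "a w = h w * l w" for w
  define b where "b w = h w * (l w)^2 / 3" for w
  have [measurable]: "h \<in> borel_measurable F" "a \<in> borel_measurable F" "b \<in> borel_measurable F"
    unfolding h_def[abs_def] a_def[abs_def] b_def[abs_def] by measurable
  have [measurable]: "h \<in> borel_measurable M" "a \<in> borel_measurable M" "b \<in> borel_measurable M"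
    unfolding h_def[abs_def] a_def[abs_def] b_def[abs_def] by measurable
  have h: "0 \<le> h w" "h w \<le> B" if "w \<in> space M" for w
  proof -
    have "exp (- ((l w)^2 * \<sigma>2 / 3)) \<le> 1" using \<open>0 \<le> \<sigma>2\<close> by simp
    then have "h w \<le> Z w" unfolding h_def using Z[OF that] by (intro mult_right_le_one_le) auto
    then show "0 \<le> h w" "h w \<le> B" using Z[OF that] by (auto simp: h_def)
  qed
  have a: "\<bar>a w\<bar> \<le> B * K" if "w \<in> space M" for w
    unfolding a_def abs_mult using h[OF that] l[OF that] by (intro mult_mono) auto
  have b: "\<bar>b w\<bar> \<le> B * K^2" if "w \<in> space M" for w
  proof -
    have "(l w)^2 \<le> K^2" using l[OF that] by (metis abs_le_square_iff abs_of_nonneg order.trans abs_ge_zero)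
    then have "h w * (l w)^2 \<le> B * K^2" using h[OF that] by (intro mult_mono) auto
    moreover have "\<bar>b w\<bar> = h w * (l w)^2 / 3" using h[OF that] by (simp add: b_def)
    moreover have "0 \<le> h w * (l w)^2" using h[OF that] by simp
    ultimately show ?thesis by linarith
  qed
  have int_h: "integrable M h" by (rule integrable_const_bound[where B=B]) (use h in auto)
  have int_a: "integrable M a" by (rule integrable_const_bound[where B="B * K"]) (use a in auto)
  have int_b: "integrable M b" by (rule integrable_const_bound[where B="B * K^2"]) (use b in auto)
  have int_aX: "integrable M (\<lambda>w. a w * X w)"
    by (rule integrable_bounded_mult[OF X(1)]) (use a in auto)
  have int_bX: "integrable M (\<lambda>w. b w * (X w - \<mu>)^2)"
    by (rule integrable_bounded_mult[OF X(2)]) (use b in auto)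
  have int_lhs: "integrable M (\<lambda>w. Z w * exp (sn_increment \<mu> \<sigma>2 (l w) (X w)))"
  proof (rule integrable_const_bound[where B="B * exp (3/2)"])
    show "AE w in M. norm (Z w * exp (sn_increment \<mu> \<sigma>2 (l w) (X w))) \<le> B * exp (3/2)"
    proof (rule AE_I2)
      fix w assume w: "w \<in> space M"
      have "Z w * exp (sn_increment \<mu> \<sigma>2 (l w) (X w)) \<le> B * exp (3/2)"
        using Z[OF w] sn_increment_le[OF \<open>0 \<le> \<sigma>2\<close>] by (intro mult_mono) auto
      then show "norm (Z w * exp (sn_increment \<mu> \<sigma>2 (l w) (X w))) \<le> B * exp (3/2)"
        using Z[OF w] by simp
    qed
  qed (simp add: sn_increment_def)
  have pointwise: "Z w * exp (sn_increment \<mu> \<sigma>2 (l w) (X w))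
      \<le> h w + (a w * X w - \<mu> * a w) + b w * (X w - \<mu>)^2" if "w \<in> space M" for w
  proof -
    have "Z w * exp (sn_increment \<mu> \<sigma>2 (l w) (X w))
        \<le> Z w * (exp (- ((l w)^2 * \<sigma>2 / 3)) * (1 + l w * (X w - \<mu>) + (l w)^2 / 3 * (X w - \<mu>)^2))"
      using Z[OF that] by (intro mult_left_mono exp_sn_increment_le) auto
    then show ?thesis by (simp add: h_def a_def b_def algebra_simps)
  qed
  have centred: "(\<integral>w. a w * X w \<partial>M) = \<mu> * (\<integral>w. a w \<partial>M)"
  proof -
    have "(\<integral>w. a w * X w \<partial>M) = (\<integral>w. a w * real_cond_exp M F X w \<partial>M)"
      by (rule real_cond_exp_intg(2)[OF int_aX, symmetric]) auto
    also have "\<dots> = (\<integral>w. a w * \<mu> \<partial>M)"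
      by (rule integral_cong_AE) (use mean in auto)
    finally show ?thesis by simp
  qed
  have variance: "(\<integral>w. b w * (X w - \<mu>)^2 \<partial>M) \<le> (\<integral>w. b w * \<sigma>2 \<partial>M)"
  proof -
    have "(\<integral>w. b w * (X w - \<mu>)^2 \<partial>M)
        = (\<integral>w. b w * real_cond_exp M F (\<lambda>w. (X w - \<mu>)^2) w \<partial>M)"
      by (rule real_cond_exp_intg(2)[OF int_bX, symmetric]) auto
    also have "\<dots> \<le> (\<integral>w. b w * \<sigma>2 \<partial>M)"
    proof (rule integral_mono_AE)
      show "integrable M (\<lambda>w. b w * real_cond_exp M F (\<lambda>w. (X w - \<mu>)^2) w)"
        by (rule real_cond_exp_intg(1)[OF int_bX]) auto
      show "AE w in M. b w * real_cond_exp M F (\<lambda>w. (X w - \<mu>)^2) w \<le> b w * \<sigma>2"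
        using AE_space var by eventually_elim (use h in \<open>auto simp: b_def intro!: mult_left_mono\<close>)
    qed (use int_b in simp)
    finally show ?thesis .
  qed
  have "(\<integral>w. Z w * exp (sn_increment \<mu> \<sigma>2 (l w) (X w)) \<partial>M)
      \<le> (\<integral>w. h w + (a w * X w - \<mu> * a w) + b w * (X w - \<mu>)^2 \<partial>M)"
    by (rule integral_mono[OF int_lhs _ pointwise]) (use int_h int_a int_aX int_bX in auto)
  also have "\<dots> = (\<integral>w. h w \<partial>M) + ((\<integral>w. a w * X w \<partial>M) - \<mu> * (\<integral>w. a w \<partial>M))
      + (\<integral>w. b w * (X w - \<mu>)^2 \<partial>M)"
    using int_h int_a int_aX int_bX by simp
  also have "\<dots> \<le> (\<integral>w. h w \<partial>M) + (\<integral>w. b w * \<sigma>2 \<partial>M)"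
    using centred variance by simp
  also have "\<dots> = (\<integral>w. h w + b w * \<sigma>2 \<partial>M)"
    using int_h int_b by simp
  also have "\<dots> \<le> (\<integral>w. Z w \<partial>M)"
  proof (rule integral_mono)
    fix w assume w: "w \<in> space M"
    define y where "y = (l w)^2 * \<sigma>2 / 3"
    have "h w + b w * \<sigma>2 = Z w * (exp (- y) * (1 + y))"
      by (simp add: h_def b_def y_def algebra_simps)
    also have "\<dots> \<le> Z w"
      using Z[OF w] exp_neg_mult_one_plus_le[of y] \<open>0 \<le> \<sigma>2\<close>
      by (intro mult_right_le_one_le) (auto simp: y_def)
    finally show "h w + b w * \<sigma>2 \<le> Z w" .
  qed (use int_h int_b Z in \<open>auto intro: integrable_const_bound[where B=B]\<close>)
  finally show ?thesis .
qed

(* l need not be bounded, so l (X - mu) need not be integrable: truncate Z to |l| <= n and pass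
   to the limit by dominated convergence. *)
lemma integral_mult_exp_sn_increment_le:
  assumes Z_meas[measurable]: "Z \<in> borel_measurable F"
    and l_meas[measurable]: "l \<in> borel_measurable F"
    and Z: "\<And>w. w \<in> space M \<Longrightarrow> 0 \<le> Z w \<and> Z w \<le> B"
    and X: "integrable M X" "integrable M (\<lambda>w. (X w - \<mu>)^2)"
    and mean: "AE w in M. real_cond_exp M F X w = \<mu>"
    and var: "AE w in M. real_cond_exp M F (\<lambda>w. (X w - \<mu>)^2) w \<le> \<sigma>2"
    and "0 \<le> \<sigma>2"
  shows "(\<integral>w. Z w * exp (sn_increment \<mu> \<sigma>2 (l w) (X w)) \<partial>M) \<le> (\<integral>w. Z w \<partial>M)"
proof -
  have [measurable]: "Z \<in> borel_measurable M" "l \<in> borel_measurable M" "X \<in> borel_measurable M"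
    using measurable_from_subalg[OF subalg Z_meas] measurable_from_subalg[OF subalg l_meas] X(1)
    by auto
  define C where "C n = {w \<in> space M. \<bar>l w\<bar> \<le> real n}" for n :: nat
  define Z' where "Z' n w = Z w * indicator (C n) w" for n w
  define l' where "l' n w = l w * indicator (C n) w" for n w
  have space_F: "space F = space M" using subalg by (simp add: subalgebra_def)
  have [measurable]: "C n \<in> sets F" for n unfolding C_def space_F[symmetric] by measurable
  then have [measurable]: "C n \<in> sets M" for n using subalg by (auto simp: subalgebra_def)
  have [measurable]: "Z' n \<in> borel_measurable F" "l' n \<in> borel_measurable F" for n
    unfolding Z'_def[abs_def] l'_def[abs_def] by measurable
  have Z': "0 \<le> Z' n w \<and> Z' n w \<le> B" if "w \<in> space M" for n w
    using Z[OF that] by (auto simp: Z'_def split: split_indicator)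
  have l': "\<bar>l' n w\<bar> \<le> real n" for n w
    by (auto simp: l'_def C_def split: split_indicator)
  have [measurable]: "Z' n \<in> borel_measurable M" for n
    unfolding Z'_def[abs_def] by measurable
  have int_Z: "integrable M Z" and int_Z': "integrable M (Z' n)" for n
    by (rule integrable_const_bound[where B=B]; use Z Z' in auto)+
  have truncated: "(\<integral>w. Z' n w * exp (sn_increment \<mu> \<sigma>2 (l w) (X w)) \<partial>M) \<le> (\<integral>w. Z w \<partial>M)" for n
  proof -
    have "(\<integral>w. Z' n w * exp (sn_increment \<mu> \<sigma>2 (l w) (X w)) \<partial>M)
        = (\<integral>w. Z' n w * exp (sn_increment \<mu> \<sigma>2 (l' n w) (X w)) \<partial>M)"
      by (rule Bochner_Integration.integral_cong) (auto simp: Z'_def l'_def split: split_indicator)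
    also have "\<dots> \<le> (\<integral>w. Z' n w \<partial>M)"
      by (rule integral_mult_exp_sn_increment_le_bounded[where B=B and K="real n",
            OF _ _ _ _ X mean var \<open>0 \<le> \<sigma>2\<close>])
         (use Z' l' in auto)
    also have "\<dots> \<le> (\<integral>w. Z w \<partial>M)"
      by (rule integral_mono[OF int_Z' int_Z]) (use Z in \<open>auto simp: Z'_def split: split_indicator\<close>)
    finally show ?thesis .
  qed
  have "(\<lambda>n. \<integral>w. Z' n w * exp (sn_increment \<mu> \<sigma>2 (l w) (X w)) \<partial>M)
      \<longlonglongrightarrow> (\<integral>w. Z w * exp (sn_increment \<mu> \<sigma>2 (l w) (X w)) \<partial>M)"
  proof (rule integral_dominated_convergence[where w="\<lambda>w. B * exp (3/2)"])
    show "AE w in M. (\<lambda>n. Z' n w * exp (sn_increment \<mu> \<sigma>2 (l w) (X w)))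
        \<longlonglongrightarrow> Z w * exp (sn_increment \<mu> \<sigma>2 (l w) (X w))"
    proof (rule AE_I2)
      fix w assume w: "w \<in> space M"
      have "w \<in> C n" if "nat \<lceil>\<bar>l w\<bar>\<rceil> \<le> n" for n
        using w real_nat_ceiling_ge[of "\<bar>l w\<bar>"] that unfolding C_def by (auto intro: order_trans)
      then have "eventually (\<lambda>n. w \<in> C n) sequentially"
        unfolding eventually_sequentially by blast
      then show "(\<lambda>n. Z' n w * exp (sn_increment \<mu> \<sigma>2 (l w) (X w)))
          \<longlonglongrightarrow> Z w * exp (sn_increment \<mu> \<sigma>2 (l w) (X w))"
        by (rule tendsto_eventually[OF eventually_mono]) (simp add: Z'_def)
    qed
    show "AE w in M. norm (Z' n w * exp (sn_increment \<mu> \<sigma>2 (l w) (X w))) \<le> B * exp (3/2)" for n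
    proof (rule AE_I2)
      fix w assume w: "w \<in> space M"
      have "Z' n w * exp (sn_increment \<mu> \<sigma>2 (l w) (X w)) \<le> B * exp (3/2)"
        using Z[OF w] sn_increment_le[OF \<open>0 \<le> \<sigma>2\<close>]
        by (intro mult_mono) (auto simp: Z'_def split: split_indicator)
      then show "norm (Z' n w * exp (sn_increment \<mu> \<sigma>2 (l w) (X w))) \<le> B * exp (3/2)"
        using Z[OF w] by (simp add: Z'_def)
    qed
  qed (auto simp: Z'_def sn_increment_def)
  then show ?thesis by (rule LIMSEQ_le_const2) (use truncated in auto)
qed

end

context finite_measure
begin

lemma markov_inequality_set_integral_split:
  fixes Y :: "'a \<Rightarrow> real" and c :: real
  assumes D: "D \<in> sets M" and Y: "integrable M Y"
  defines "E \<equiv> {w \<in> space M. c \<le> Y w}"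
  shows "c * measure M (D \<inter> E) + (\<integral>w\<in>D - E. Y w \<partial>M) \<le> (\<integral>w\<in>D. Y w \<partial>M)"
proof -
  have [measurable]: "Y \<in> borel_measurable M" using Y by simp
  have [measurable]: "E \<in> sets M" unfolding E_def by measurable
  have set_integrable: "set_integrable M A f" if "A \<in> sets M" "integrable M f" for A and f :: "'a \<Rightarrow> real"
    unfolding set_integrable_def using that by (rule integrable_mult_indicator)
  have "c * measure M (D \<inter> E) = (\<integral>w\<in>D \<inter> E. c \<partial>M)"
    using D by (simp add: set_integral_const)
  also have "\<dots> \<le> (\<integral>w\<in>D \<inter> E. Y w \<partial>M)"
    using D Y by (intro set_integral_mono set_integrable) (auto simp: E_def)
  finally have "c * measure M (D \<inter> E) + (\<integral>w\<in>D - E. Y w \<partial>M)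
      \<le> (\<integral>w\<in>D \<inter> E. Y w \<partial>M) + (\<integral>w\<in>D - E. Y w \<partial>M)" by simp
  also have "\<dots> = (\<integral>w\<in>(D \<inter> E) \<union> (D - E). Y w \<partial>M)"
    using D Y by (intro set_integral_Un[symmetric] set_integrable) auto
  also have "(D \<inter> E) \<union> (D - E) = D" by blast
  finally show ?thesis .
qed

lemma ville_inequality:
  fixes F :: "nat \<Rightarrow> 'a measure" and Y :: "nat \<Rightarrow> 'a \<Rightarrow> real"
  assumes sub: "\<And>t. subalgebra M (F t)"
    and mono: "\<And>s t. s \<le> t \<Longrightarrow> sets (F s) \<subseteq> sets (F t)"
    and adapted: "\<And>t. Y t \<in> borel_measurable (F t)"
    and integrable: "\<And>t. integrable M (Y t)"
    and nonneg: "\<And>t w. w \<in> space M \<Longrightarrow> 0 \<le> Y t w"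
    and supermartingale: "\<And>t A. A \<in> sets (F t) \<Longrightarrow>
          (\<integral>w\<in>A. Y (Suc t) w \<partial>M) \<le> (\<integral>w\<in>A. Y t w \<partial>M)"
    and "0 < c"
  shows "measure M {w \<in> space M. \<exists>t. c \<le> Y t w} \<le> (\<integral>w. Y 0 w \<partial>M) / c"
proof -
  have space_F: "space (F t) = space M" for t using sub[of t] by (simp add: subalgebra_def)
  have [measurable]: "Y t \<in> borel_measurable M" for t using integrable[of t] by simp
  define E where "E t = {w \<in> space M. c \<le> Y t w}" for t
  define B where "B N = {w \<in> space M. \<exists>t\<le>N. c \<le> Y t w}" for N
  have B_F: "B N \<in> sets (F N)" for N
  proof -
    have [measurable]: "Y t \<in> borel_measurable (F N)" if "t \<le> N" for t
      by (rule measurable_from_subalg[OF _ adapted])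
         (use that mono space_F in \<open>auto simp: subalgebra_def\<close>)
    have "B N = (\<Union>t\<in>{..N}. {w \<in> space (F N). c \<le> Y t w})"
      by (auto simp: B_def space_F)
    also have "\<dots> \<in> sets (F N)" by measurable
    finally show ?thesis .
  qed
  have [measurable]: "B N \<in> sets M" for N using B_F sub by (auto simp: subalgebra_def)
  \<comment> \<open>Optional stopping for the process stopped when it first reaches \<open>c\<close>.\<close>
  have stopped: "c * measure M (B N) + (\<integral>w\<in>space M - B N. Y N w \<partial>M) \<le> (\<integral>w. Y 0 w \<partial>M)" for N
  proof (induction N)
    case 0
    have "B 0 = space M \<inter> E 0" "space M - B 0 = space M - E 0" by (auto simp: B_def E_def)
    then show ?case
      using markov_inequality_set_integral_split[OF sets.top integrable[of 0], of c]
      by (simp add: E_def set_integral_space[OF integrable])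
  next
    case (Suc N)
    define D where "D = space M - B N"
    have D_F: "D \<in> sets (F N)" unfolding D_def space_F[symmetric, of N] by (rule sets.compl_sets[OF B_F])
    have [measurable]: "D \<in> sets M" unfolding D_def by measurable
    have "B (Suc N) = B N \<union> (D \<inter> E (Suc N))" and "space M - B (Suc N) = D - E (Suc N)"
      by (auto simp: B_def D_def E_def le_Suc_eq)
    moreover have "measure M (B N \<union> (D \<inter> E (Suc N))) = measure M (B N) + measure M (D \<inter> E (Suc N))"
      by (rule finite_measure_Union) (auto simp: D_def E_def)
    moreover have "c * measure M (D \<inter> E (Suc N)) + (\<integral>w\<in>D - E (Suc N). Y (Suc N) w \<partial>M)
        \<le> (\<integral>w\<in>D. Y (Suc N) w \<partial>M)"
      unfolding E_def by (rule markov_inequality_set_integral_split) (auto intro: integrable)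
    moreover have "(\<integral>w\<in>D. Y (Suc N) w \<partial>M) \<le> (\<integral>w\<in>D. Y N w \<partial>M)"
      by (rule supermartingale[OF D_F])
    ultimately show ?case using Suc.IH unfolding D_def by (simp add: algebra_simps)
  qed
  have "measure M (B N) \<le> (\<integral>w. Y 0 w \<partial>M) / c" for N
  proof -
    have "0 \<le> (\<integral>w\<in>space M - B N. Y N w \<partial>M)"
      unfolding set_lebesgue_integral_def using nonneg by (intro Bochner_Integration.integral_nonneg) auto
    then show ?thesis using stopped[of N] \<open>0 < c\<close> by (simp add: field_simps)
  qed
  moreover have "(\<lambda>N. measure M (B N)) \<longlonglongrightarrow> measure M (\<Union>N. B N)"
    by (rule finite_Lim_measure_incseq) (auto simp: incseq_def B_def intro: le_trans)
  moreover have "(\<Union>N. B N) = {w \<in> space M. \<exists>t. c \<le> Y t w}"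
    by (auto simp: B_def)
  ultimately show ?thesis by (metis LIMSEQ_le_const2)
qed

end

lemma mem_sn_interval_iff:
  assumes "0 < S"
  shows "m \<in> sn_interval U D S \<longleftrightarrow> (m * S - U)^2 < D"
proof -
  have "m \<in> sn_interval U D S \<longleftrightarrow> 0 \<le> D \<and> U - sqrt D < m * S \<and> m * S < U + sqrt D"
    using assms by (simp add: sn_interval_def pos_divide_less_eq pos_less_divide_eq not_less)
  also have "\<dots> \<longleftrightarrow> 0 \<le> D \<and> \<bar>m * S - U\<bar> < sqrt D"
    by (auto simp: abs_less_iff)
  also have "\<dots> \<longleftrightarrow> (m * S - U)^2 < D"
    by (metis real_sqrt_abs real_sqrt_less_iff zero_le_power2 order.strict_trans1 less_imp_le)
  finally show ?thesis .
qed

definition sn_process ::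
    "real \<Rightarrow> real \<Rightarrow> (nat \<Rightarrow> 'a \<Rightarrow> real) \<Rightarrow> (nat \<Rightarrow> 'a \<Rightarrow> real) \<Rightarrow> nat \<Rightarrow> 'a \<Rightarrow> real" where
  "sn_process \<mu> \<sigma>2 lam X t w = (\<Sum>i=1..t. sn_increment \<mu> \<sigma>2 (lam i w) (X i w))"

lemma D_plus_sn_process:
  "D_plus \<alpha> \<sigma>2 lam X t w = (\<mu> * ((\<Sum>i=1..t. (lam i w)^2) / 3) - U_plus lam X t w)^2
     + 2 * ((\<Sum>i=1..t. (lam i w)^2) / 3) * (sn_process \<mu> \<sigma>2 lam X t w - ln (2 / \<alpha>))"
proof -
  have "sn_process \<mu> \<sigma>2 lam X t w = (\<Sum>i=1..t. lam i w * X i w) - \<mu> * (\<Sum>i=1..t. lam i w)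
     - (\<Sum>i=1..t. (lam i w)^2 * (X i w)^2) / 6 + \<mu> * (\<Sum>i=1..t. (lam i w)^2 * X i w) / 3
     - \<mu>^2 * (\<Sum>i=1..t. (lam i w)^2) / 6 - \<sigma>2 * (\<Sum>i=1..t. (lam i w)^2) / 3"
    by (induction t) (simp_all add: sn_process_def sn_increment_def power2_diff field_simps)
  moreover have "(Q / 3 - R)^2 - 2 * P / 3 * (L - T + (V + 2 * \<sigma>2 * P) / 6)
      = (\<mu> * (P / 3) - (Q / 3 - R))^2
        + 2 * (P / 3) * ((T - \<mu> * R - V / 6 + \<mu> * Q / 3 - \<mu>^2 * P / 6 - \<sigma>2 * P / 3) - L)"
    for P Q R T V L :: real
    by (simp add: power2_eq_square field_simps)
  ultimately show ?thesis
    unfolding D_plus_def U_plus_def by (simp only:)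
qed

lemma aCI_SN_plus_iff:
  assumes "0 < \<alpha>" "\<alpha> < 2"
  shows "\<mu> \<in> aCI_SN_plus \<alpha> \<sigma>2 lam X t w \<longleftrightarrow> ln (2 / \<alpha>) < sn_process \<mu> \<sigma>2 lam X t w"
proof -
  define P where "P = (\<Sum>i=1..t. (lam i w)^2) / 3"
  have "0 < ln (2 / \<alpha>)" using assms by simp
  show ?thesis
  proof (cases "P = 0")
    case True
    then have "\<forall>i\<in>{1..t}. lam i w = 0" unfolding P_def by (simp add: sum_nonneg_eq_0_iff)
    then have "sn_process \<mu> \<sigma>2 lam X t w = 0" by (simp add: sn_process_def sn_increment_def)
    then show ?thesis using True \<open>0 < ln (2 / \<alpha>)\<close>
      by (simp add: aCI_SN_plus_def P_def sn_interval_def)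
  next
    case False
    then have "0 < P" unfolding P_def by (simp add: less_le sum_nonneg)
    then show ?thesis
      unfolding aCI_SN_plus_def P_def[symmetric] mem_sn_interval_iff[OF \<open>0 < P\<close>]
        D_plus_sn_process[where \<mu>=\<mu>] by (simp add: P_def[symmetric] zero_less_mult_iff)
  qed
qed

lemma aCI_SN_minus_eq_aCI_SN_plus_uminus:
  "aCI_SN_minus \<alpha> \<sigma>2 lam X t w = aCI_SN_plus \<alpha> \<sigma>2 (\<lambda>t w. - lam t w) X t w"
  by (simp add: aCI_SN_minus_def aCI_SN_plus_def U_minus_def U_plus_def D_minus_def D_plus_def sum_negf)

locale mean_variance_process = prob_space M for M :: "'a measure" +
  fixes F :: "nat \<Rightarrow> 'a measure" and X :: "nat \<Rightarrow> 'a \<Rightarrow> real" and \<mu> \<sigma>2 :: real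
  assumes subalgebra_F: "\<And>t. subalgebra M (F t)"
    and sets_F_mono: "\<And>s t. s \<le> t \<Longrightarrow> sets (F s) \<subseteq> sets (F t)"
    and adapted: "\<And>t. t \<ge> 1 \<Longrightarrow> X t \<in> borel_measurable (F t)"
    and square_integrable: "\<And>t. t \<ge> 1 \<Longrightarrow> integrable M (\<lambda>w. (X t w)^2)"
    and cond_mean: "\<And>t. t \<ge> 1 \<Longrightarrow> AE w in M. real_cond_exp M (F (t - 1)) (X t) w = \<mu>"
    and cond_variance: "\<And>t. t \<ge> 1 \<Longrightarrow>
          AE w in M. real_cond_exp M (F (t - 1)) (\<lambda>w. (X t w - \<mu>)^2) w \<le> \<sigma>2"
begin

lemma space_F: "space (F t) = space M"
  using subalgebra_F[of t] by (simp add: subalgebra_def)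

lemma borel_measurable_F_mono:
  "s \<le> t \<Longrightarrow> f \<in> borel_measurable (F s) \<Longrightarrow> f \<in> borel_measurable (F t)"
  by (rule measurable_from_subalg) (auto simp: subalgebra_def space_F sets_F_mono)

lemma borel_measurable_F_M: "f \<in> borel_measurable (F t) \<Longrightarrow> f \<in> borel_measurable M"
  by (rule measurable_from_subalg[OF subalgebra_F])

lemma finite_measure_subalgebra_F: "finite_measure_subalgebra M (F t)"
  by (simp add: finite_measure_subalgebra_def finite_measure_subalgebra_axioms_def
      subalgebra_F finite_measure_axioms)

lemma integrable_X:
  assumes "1 \<le> t" shows "integrable M (X t)" "integrable M (\<lambda>w. (X t w - \<mu>)^2)"
proof -
  show "integrable M (X t)"
    using borel_measurable_F_M[OF adapted[OF assms]] square_integrable[OF assms]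
    by (rule square_integrable_imp_integrable)
  then show "integrable M (\<lambda>w. (X t w - \<mu>)^2)"
    using square_integrable[OF assms] by (simp add: power2_diff)
qed

lemma variance_bound_nonneg: "0 \<le> \<sigma>2"
proof -
  have "AE w in M. 0 \<le> real_cond_exp M (F 0) (\<lambda>w. (X 1 w - \<mu>)^2) w"
    using borel_measurable_F_M[OF adapted[of 1]]
    by (intro sigma_finite_subalgebra.real_cond_exp_pos finite_measure_subalgebra_is_sigma_finite
        finite_measure_subalgebra_F) auto
  moreover have "AE w in M. real_cond_exp M (F 0) (\<lambda>w. (X 1 w - \<mu>)^2) w \<le> \<sigma>2"
    using cond_variance[of 1] by simp
  ultimately have "AE w in M. 0 \<le> \<sigma>2" by eventually_elim (rule order_trans)
  then show ?thesis by simp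
qed

context
  fixes lam :: "nat \<Rightarrow> 'a \<Rightarrow> real"
  assumes predictable: "\<And>t. t \<ge> 1 \<Longrightarrow> lam t \<in> borel_measurable (F (t - 1))"
begin

lemma borel_measurable_sn_process: "sn_process \<mu> \<sigma>2 lam X t \<in> borel_measurable (F t)"
proof -
  have [measurable]: "X i \<in> borel_measurable (F t)" "lam i \<in> borel_measurable (F t)"
    if "i \<in> {1..t}" for i
    using that borel_measurable_F_mono[OF _ adapted] borel_measurable_F_mono[OF _ predictable]
    by auto
  show ?thesis
    unfolding sn_process_def[abs_def] sn_increment_def by measurable
qed

lemma exp_sn_process_le: "exp (sn_process \<mu> \<sigma>2 lam X t w) \<le> exp (3/2 * t)"
proof -
  have "sn_process \<mu> \<sigma>2 lam X t w \<le> (\<Sum>i=1..t. 3/2)"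
    unfolding sn_process_def by (intro sum_mono sn_increment_le variance_bound_nonneg)
  then show ?thesis by simp
qed

lemma integrable_exp_sn_process: "integrable M (\<lambda>w. exp (sn_process \<mu> \<sigma>2 lam X t w))"
  using borel_measurable_F_M[OF borel_measurable_sn_process] exp_sn_process_le
  by (intro integrable_const_bound[where B="exp (3/2 * t)"]) auto

lemma set_integral_exp_sn_process_Suc_le:
  assumes A: "A \<in> sets (F t)"
  shows "(\<integral>w\<in>A. exp (sn_process \<mu> \<sigma>2 lam X (Suc t) w) \<partial>M)
       \<le> (\<integral>w\<in>A. exp (sn_process \<mu> \<sigma>2 lam X t w) \<partial>M)"
proof -
  have "(\<integral>w. (indicator A w * exp (sn_process \<mu> \<sigma>2 lam X t w))
            * exp (sn_increment \<mu> \<sigma>2 (lam (Suc t) w) (X (Suc t) w)) \<partial>M)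
      \<le> (\<integral>w. indicator A w * exp (sn_process \<mu> \<sigma>2 lam X t w) \<partial>M)"
  proof (rule finite_measure_subalgebra.integral_mult_exp_sn_increment_le
      [OF finite_measure_subalgebra_F, where B="exp (3/2 * t)"])
    show "(\<lambda>w. indicator A w * exp (sn_process \<mu> \<sigma>2 lam X t w)) \<in> borel_measurable (F t)"
      using A borel_measurable_sn_process by measurable
    show "lam (Suc t) \<in> borel_measurable (F t)" using predictable[of "Suc t"] by simp
    show "AE w in M. real_cond_exp M (F t) (X (Suc t)) w = \<mu>"
      using cond_mean[of "Suc t"] by simp
    show "AE w in M. real_cond_exp M (F t) (\<lambda>w. (X (Suc t) w - \<mu>)^2) w \<le> \<sigma>2"
      using cond_variance[of "Suc t"] by simp
  qed (use exp_sn_process_le integrable_X variance_bound_nonneg in \<open>auto simp: indicator_def\<close>)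
  then show ?thesis
    by (simp add: set_lebesgue_integral_def sn_process_def exp_add mult.assoc)
qed

lemma prob_sn_process_ge_le:
  "measure M {w \<in> space M. \<exists>t. c \<le> sn_process \<mu> \<sigma>2 lam X t w} \<le> exp (- c)"
proof -
  have "measure M {w \<in> space M. \<exists>t. exp c \<le> exp (sn_process \<mu> \<sigma>2 lam X t w)}
      \<le> (\<integral>w. exp (sn_process \<mu> \<sigma>2 lam X 0 w) \<partial>M) / exp c"
    by (rule ville_inequality[OF subalgebra_F sets_F_mono])
       (use borel_measurable_sn_process integrable_exp_sn_process set_integral_exp_sn_process_Suc_le
         in auto)
  then show ?thesis by (simp add: sn_process_def exp_minus inverse_eq_divide prob_space)
qed

lemma prob_notin_aCI_SN_plus:
  assumes "0 < \<alpha>" "\<alpha> < 2"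
  shows "1 - \<alpha> / 2 \<le> measure M {w \<in> space M. \<forall>t\<ge>1. \<mu> \<notin> aCI_SN_plus \<alpha> \<sigma>2 lam X t w}"
proof -
  define L where "L = ln (2 / \<alpha>)"
  define A where "A = {w \<in> space M. \<exists>t\<ge>1. L < sn_process \<mu> \<sigma>2 lam X t w}"
  have [measurable]: "sn_process \<mu> \<sigma>2 lam X t \<in> borel_measurable M" for t
    by (rule borel_measurable_F_M[OF borel_measurable_sn_process])
  have good_event: "{w \<in> space M. \<forall>t\<ge>1. \<mu> \<notin> aCI_SN_plus \<alpha> \<sigma>2 lam X t w} = space M - A"
    using aCI_SN_plus_iff[OF assms, of \<mu> \<sigma>2 lam X] unfolding A_def L_def by blast
  have "A \<in> sets M" unfolding A_def by measurable
  have "measure M A \<le> measure M {w \<in> space M. \<exists>t. L \<le> sn_process \<mu> \<sigma>2 lam X t w}"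
    by (rule finite_measure_mono) (unfold A_def, blast intro: less_imp_le, measurable)
  also have "\<dots> \<le> exp (- L)" by (rule prob_sn_process_ge_le)
  also have "\<dots> = \<alpha> / 2" using assms by (simp add: L_def exp_minus)
  finally show ?thesis
    unfolding good_event prob_compl[OF \<open>A \<in> sets M\<close>] by simp
qed

end

end

theorem lemma5:
  fixes M :: "'a measure" and F :: "nat \<Rightarrow> 'a measure"
    and X lam :: "nat \<Rightarrow> 'a \<Rightarrow> real" and \<mu> \<sigma>2 \<alpha> :: real
  assumes "prob_space M"
    and sub: "\<And>t. subalgebra M (F t)"
    and mono: "\<And>s t. s \<le> t \<Longrightarrow> sets (F s) \<subseteq> sets (F t)"
    and triv: "sets (F 0) = {{}, space M}"
    and adapted: "\<And>t. t \<ge> 1 \<Longrightarrow> X t \<in> borel_measurable (F t)"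
    and integrable: "\<And>t. t \<ge> 1 \<Longrightarrow> integrable M (\<lambda>w. (X t w)^2)"
    and mean: "\<And>t. t \<ge> 1 \<Longrightarrow> AE w in M. real_cond_exp M (F (t - 1)) (X t) w = \<mu>"
    and var: "\<And>t. t \<ge> 1 \<Longrightarrow>
               AE w in M. real_cond_exp M (F (t - 1)) (\<lambda>w. (X t w - \<mu>)^2) w \<le> \<sigma>2"
    and alpha: "0 < \<alpha>" "\<alpha> < 1"
    and predictable: "\<And>t. t \<ge> 1 \<Longrightarrow> lam t \<in> borel_measurable (F (t - 1))"
  shows "measure M {w \<in> space M. \<forall>t\<ge>1. \<mu> \<notin> aCI_SN_plus \<alpha> \<sigma>2 lam X t w} \<ge> 1 - \<alpha> / 2
       \<and> measure M {w \<in> space M. \<forall>t\<ge>1. \<mu> \<notin> aCI_SN_minus \<alpha> \<sigma>2 lam X t w} \<ge> 1 - \<alpha> / 2"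
proof -
  interpret mean_variance_process M F X \<mu> \<sigma>2
    using assms by (intro mean_variance_process.intro mean_variance_process_axioms.intro) auto
  have "\<alpha> < 2" using alpha by simp
  have "(\<lambda>w. - lam t w) \<in> borel_measurable (F (t - 1))" if "t \<ge> 1" for t
    using predictable[OF that] by measurable
  then show ?thesis
    unfolding aCI_SN_minus_eq_aCI_SN_plus_uminus
    using prob_notin_aCI_SN_plus[OF predictable alpha(1) \<open>\<alpha> < 2\<close>]
      prob_notin_aCI_SN_plus[of "\<lambda>t w. - lam t w", OF _ alpha(1) \<open>\<alpha> < 2\<close>]
    by blast
qed

end
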